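(* Let $A\subset\mathbb{R}$, let $f:A\to\mathbb{R}$ be a function and let $a,L\in\mathbb{R}$. Then the following are equivalent: (i) for every real $\varepsilon>0$ there exists a real $\delta_\varepsilon>0$ such that $$\left\{x\in\left((a-\delta_{\varepsilon},a+\delta_{\varepsilon})\setminus\{a\}\right)\cap A:\ |f(x)-L|\geq\varepsilon\right\}=\varnothing;$$ (ii) for every real $\varepsilon>0$ there exists a real $\delta_\varepsilon>0$ such that the set $$\left\{x\in\left((a-\delta_{\varepsilon},a+\delta_{\varepsilon})\setminus\{a\}\right)\cap A:\ |f(x)-L|\geq\varepsilon\right\}$$ is finite. That is, $T_1\lim_{x\to a}f(x)=L$ if and only if $T_3\lim_{x\to a}f(x)=L$.
   Context: Condition (i) is the classical limit, written $T_1\lim_{x\to a}f(x)=L$; condition (ii) defines the notion written $T_3\lim_{x\to a}f(x)=L$. *)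

theory Defs
  imports Complex_Main
begin

text \<open>The function f : A \<rightarrow> R is modelled as a total function real \<Rightarrow> real; only its values on A matter.\<close>
definition bad_set :: "real set \<Rightarrow> (real \<Rightarrow> real) \<Rightarrow> real \<Rightarrow> real \<Rightarrow> real \<Rightarrow> real \<Rightarrow> real set" where
  "bad_set A f a L \<epsilon> d = {x \<in> ({a - d <..< a + d} - {a}) \<inter> A. \<bar>f x - L\<bar> \<ge> \<epsilon>}"

definition T1_lim :: "real set \<Rightarrow> (real \<Rightarrow> real) \<Rightarrow> real \<Rightarrow> real \<Rightarrow> bool" where
  "T1_lim A f a L \<longleftrightarrow> (\<forall>\<epsilon>>0. \<exists>d>0. bad_set A f a L \<epsilon> d = {})"

definition T3_lim :: "real set \<Rightarrow> (real \<Rightarrow> real) \<Rightarrow> real \<Rightarrow> real \<Rightarrow> bool" where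
  "T3_lim A f a L \<longleftrightarrow> (\<forall>\<epsilon>>0. \<exists>d>0. finite (bad_set A f a L \<epsilon> d))"

end

theory Submission
  imports Defs "HOL-Analysis.Elementary_Metric_Spaces"
begin

text \<open>Since a never lies in the bad set, a finite bad set keeps a positive distance from a;
  shrinking the radius below that distance empties it.\<close>

lemma bad_set_antimono:
  assumes "d' \<le> d"
  shows "bad_set A f a L \<epsilon> d' \<subseteq> bad_set A f a L \<epsilon> d"
  using assms unfolding bad_set_def by auto

lemma bad_set_empty_if_finite:
  assumes "d > 0" and "finite (bad_set A f a L \<epsilon> d)"
  shows "\<exists>d'>0. bad_set A f a L \<epsilon> d' = {}"
proof -
  obtain r where "r > 0" and r: "\<forall>x\<in>bad_set A f a L \<epsilon> d. x \<noteq> a \<longrightarrow> r \<le> dist a x"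
    using finite_set_avoid[OF assms(2)] by blast
  have "x \<notin> bad_set A f a L \<epsilon> (min d r)" for x
  proof
    assume x: "x \<in> bad_set A f a L \<epsilon> (min d r)"
    then have "x \<in> bad_set A f a L \<epsilon> d"
      using bad_set_antimono[of "min d r" d A f a L \<epsilon>] by auto
    moreover have "x \<noteq> a" and "dist a x < r"
      using x by (auto simp: bad_set_def dist_real_def)
    ultimately show False
      using r by fastforce
  qed
  then show ?thesis
    using assms(1) \<open>r > 0\<close> by (intro exI[of _ "min d r"]) auto
qed

theorem theorem1:
  fixes A :: "real set" and f :: "real \<Rightarrow> real" and a L :: real
  shows "T1_lim A f a L \<longleftrightarrow> T3_lim A f a L"
  unfolding T1_lim_def T3_lim_def
  by (metis finite.emptyI bad_set_empty_if_finite)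

end
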